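(* In the setting below, fix $j\in[p]$ and suppose $\|\boldsymbol\Theta_{\mathcal N_2}\|_{2\to\infty}\le C_1$, $\|\boldsymbol\Theta^*_{\mathcal N_2}\|_{2\to\infty}\le C_1$, $\|\mathbf A^*\|_{2\to\infty}\le C_2$, $\sigma_r(\mathcal I_{2,j}(\boldsymbol\Theta_{\mathcal N_2}))>0$, and $$\|\mathbf Z_{\mathcal N_2,j}^T\mathrm{diag}(\boldsymbol\Omega_{\mathcal N_2,j})\boldsymbol\Theta_{\mathcal N_2}\|+\|\mathbf B_{2,j}(\boldsymbol\Theta_{\mathcal N_2})\|+\beta_{2,j}(\boldsymbol\Theta_{\mathcal N_2})\kappa_3(3C_1C_2)\le\min\Big\{\frac{\sigma_r^2(\mathcal I_{2,j}(\boldsymbol\Theta_{\mathcal N_2}))}{4\gamma_{2,j}(\boldsymbol\Theta_{\mathcal N_2})\kappa_3(3C_1C_2)},\ \tfrac12\sigma_r(\mathcal I_{2,j}(\boldsymbol\Theta_{\mathcal N_2}))C_2\Big\}$$ (the first term of the minimum read as $+\infty$ if its denominator is $0$). Then there exists $\tilde{\mathbf a}_j\in\mathbb R^r$ with $S_{2,j}(\tilde{\mathbf a}_j;\boldsymbol\Theta_{\mathcal N_2})=\mathbf 0$ and $$\|\tilde{\mathbf a}_j-\mathbf a_j^*\|\le2\sigma_r^{-1}(\mathcal I_{2,j}(\boldsymbol\Theta_{\mathcal N_2}))\big\{\|\mathbf Z_{\mathcal N_2,j}^T\mathrm{diag}(\boldsymbol\Omega_{\mathcal N_2,j})\boldsymbol\Theta_{\mathcal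 N_2}\|+\|\mathbf B_{2,j}(\boldsymbol\Theta_{\mathcal N_2})\|+\beta_{2,j}(\boldsymbol\Theta_{\mathcal N_2})\kappa_3(3C_1C_2)\big\},$$ and moreover $\|\tilde{\mathbf a}_j-\mathbf a_j^*\|\le C_2$.
   Context: Deterministic setting: $\phi>0$; $b:\mathbb R\to\mathbb R$ is three times continuously differentiable with $b''>0$; $\mathcal N_2\subset[n]$ nonempty; $\boldsymbol\Theta^*_{\mathcal N_2}=(\boldsymbol\theta_i^{*T})_{i\in\mathcal N_2}$ and $\boldsymbol\Theta_{\mathcal N_2}=(\boldsymbol\theta_i^{T})_{i\in\mathcal N_2}$ are $|\mathcal N_2|\times r$ matrices, $\mathbf A^*\in\mathbb R^{p\times r}$ with rows $\mathbf a_j^{*T}$, and $m^*_{ij}=\boldsymbol\theta_i^{*T}\mathbf a_j^*$; $C_1,C_2>0$; $y_{ij}\in\mathbb R$, $\omega_{ij}\in\{0,1\}$ are fixed numbers; $z_{ij}=y_{ij}-b'(m^*_{ij})$, $\mathbf Z_{\mathcal N_2,j}=(z_{ij})_{i\in\mathcal N_2}$ (column vector), $\mathrm{diag}(\boldsymbol\Omega_{\mathcal N_2,j})=\mathrm{diag}((\omega_{ij})_{i\in\mathcal N_2})$. $\kappa_3(\alpha)=\sup_{|x|\le\alpha}|b'''(x)|$. Definitions: $S_{2,j}(\mathbf a;\boldsymbol\Theta_{\mathcal N_2})=\phi^{-1}\sum_{i\in\mathcal N_2}\omega_{ij}\{y_{ij}-b'(\mathbf a^T\boldsymbol\theta_i)\}\boldsymbol\theta_i$;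 $\mathbf B_{2,j}(\boldsymbol\Theta_{\mathcal N_2})=\sum_{i\in\mathcal N_2}\omega_{ij}b''(m^*_{ij})\boldsymbol\theta_i(\boldsymbol\theta_i-\boldsymbol\theta_i^* )^T\mathbf a_j^*$; $\mathcal I_{2,j}(\boldsymbol\Theta_{\mathcal N_2})=\sum_{i\in\mathcal N_2}\omega_{ij}b''(m^*_{ij})\boldsymbol\theta_i\boldsymbol\theta_i^T$; $\beta_{2,j}(\boldsymbol\Theta_{\mathcal N_2})=\sup_{\|\mathbf u\|=1}\sum_{i\in\mathcal N_2}\omega_{ij}((\boldsymbol\theta_i-\boldsymbol\theta_i^* )^T\mathbf a_j^* )^2|\boldsymbol\theta_i^T\mathbf u|$; $\gamma_{2,j}(\boldsymbol\Theta_{\mathcal N_2})=\sup_{\|\mathbf u\|=1}\sum_{i\in\mathcal N_2}\omega_{ij}|\boldsymbol\theta_i^T\mathbf u|^3$. $\sigma_r(\cdot)$ is the $r$-th largest singular value; $\|X\|_{2\to\infty}$ the maximal row Euclidean norm. *)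

theory Defs
  imports "HOL-Analysis.Analysis"
begin

text \<open>Vectors in R^r are modelled as real^'r for a finite index type 'r (r = CARD('r)).
  Units i range over a finite nonempty index set N2 of naturals; theta i is the i-th row
  of Theta_{N2}.\<close>

text \<open>r-th largest singular value of an r x r matrix, i.e. the smallest singular value:
  min over unit vectors u of norm (M u).\<close>
definition sigma_min :: "real^'r^'r \<Rightarrow> real" where
  "sigma_min M = Inf {norm (M *v u) | u. norm u = 1}"

text \<open>kappa_3(alpha) = sup_{|x| \<le> alpha} |b'''(x)|, with b3 = b'''.\<close>
definition kappa3 :: "(real \<Rightarrow> real) \<Rightarrow> real \<Rightarrow> real" where
  "kappa3 b3 \<alpha> = Sup {\<bar>b3 x\<bar> | x. \<bar>x\<bar> \<le> \<alpha>}"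

text \<open>Score S_{2,j}(a; Theta): b1 = b', omega_i = omega_ij, y_i = y_ij.\<close>
definition S2 :: "real \<Rightarrow> (real \<Rightarrow> real) \<Rightarrow> nat set \<Rightarrow> (nat \<Rightarrow> real) \<Rightarrow> (nat \<Rightarrow> real)
    \<Rightarrow> (nat \<Rightarrow> real^'r) \<Rightarrow> real^'r \<Rightarrow> real^'r" where
  "S2 \<phi> b1 N2 \<omega> y \<theta> a =
     (1 / \<phi>) *\<^sub>R (\<Sum>i\<in>N2. (\<omega> i * (y i - b1 (a \<bullet> \<theta> i))) *\<^sub>R \<theta> i)"

text \<open>Z^T diag(Omega) Theta, as a vector in R^r, with z_i = y_i - b'(m*_i), m*_i = theta*_i . a*_j.\<close>
definition ZOmegaTheta :: "(real \<Rightarrow> real) \<Rightarrow> nat set \<Rightarrow> (nat \<Rightarrow> real) \<Rightarrow> (nat \<Rightarrow> real)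
    \<Rightarrow> (nat \<Rightarrow> real^'r) \<Rightarrow> (nat \<Rightarrow> real^'r) \<Rightarrow> real^'r \<Rightarrow> real^'r" where
  "ZOmegaTheta b1 N2 \<omega> y \<theta> \<theta>s as =
     (\<Sum>i\<in>N2. (\<omega> i * (y i - b1 (\<theta>s i \<bullet> as))) *\<^sub>R \<theta> i)"

definition B2 :: "(real \<Rightarrow> real) \<Rightarrow> nat set \<Rightarrow> (nat \<Rightarrow> real)
    \<Rightarrow> (nat \<Rightarrow> real^'r) \<Rightarrow> (nat \<Rightarrow> real^'r) \<Rightarrow> real^'r \<Rightarrow> real^'r" where
  "B2 b2 N2 \<omega> \<theta> \<theta>s as =
     (\<Sum>i\<in>N2. (\<omega> i * b2 (\<theta>s i \<bullet> as) * ((\<theta> i - \<theta>s i) \<bullet> as)) *\<^sub>R \<theta> i)"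

definition I2 :: "(real \<Rightarrow> real) \<Rightarrow> nat set \<Rightarrow> (nat \<Rightarrow> real)
    \<Rightarrow> (nat \<Rightarrow> real^'r) \<Rightarrow> (nat \<Rightarrow> real^'r) \<Rightarrow> real^'r \<Rightarrow> real^'r^'r" where
  "I2 b2 N2 \<omega> \<theta> \<theta>s as =
     (\<chi> k l. \<Sum>i\<in>N2. \<omega> i * b2 (\<theta>s i \<bullet> as) * (\<theta> i $ k) * (\<theta> i $ l))"

definition beta2 :: "nat set \<Rightarrow> (nat \<Rightarrow> real)
    \<Rightarrow> (nat \<Rightarrow> real^'r) \<Rightarrow> (nat \<Rightarrow> real^'r) \<Rightarrow> real^'r \<Rightarrow> real" where
  "beta2 N2 \<omega> \<theta> \<theta>s as =
     Sup {\<Sum>i\<in>N2. \<omega> i * ((\<theta> i - \<theta>s i) \<bullet> as)^2 * \<bar>\<theta> i \<bullet> u\<bar> | u. norm u = 1}"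

definition gamma2 :: "nat set \<Rightarrow> (nat \<Rightarrow> real) \<Rightarrow> (nat \<Rightarrow> real^'r) \<Rightarrow> real" where
  "gamma2 N2 \<omega> \<theta> = Sup {\<Sum>i\<in>N2. \<omega> i * \<bar>\<theta> i \<bullet> u\<bar>^3 | u. norm u = 1}"

end

theory Submission
  imports Defs
begin

(* Write a = a*_j + d. Expanding b' to first order around m*_ij turns the score equation
   S_2j(a*_j + d) = 0 into I_2j d = Z^T diag(Omega) Theta - B_2j - R(d), where the Taylor
   remainder satisfies |R(d)| <= kappa_3 (gamma_2j |d|^2 + beta_2j) as long as |d| <= C2, because
   all arguments of b'' then stay in [-3 C1 C2, 3 C1 C2]; the cubic quantity gamma_2j enters
   through x^2 y <= (2 x^3 + y^3) / 3. If E denotes the bracket in the claimed bound, the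
   hypothesis makes d |-> I_2j^-1 (Z^T diag(Omega) Theta - B_2j - R(d)) map the ball of radius
   2 E / sigma_r into itself, so Brouwer's fixed point theorem provides the zero. *)

lemma taylor_linearization_error_le:
  fixes f f' f'' :: "real \<Rightarrow> real"
  assumes f': "\<And>x. (f has_real_derivative f' x) (at x)"
    and f'': "\<And>x. (f' has_real_derivative f'' x) (at x)"
    and K: "\<And>t. \<bar>t\<bar> \<le> M \<Longrightarrow> \<bar>f'' t\<bar> \<le> K"
    and x: "\<bar>x\<bar> \<le> M" and m: "\<bar>m\<bar> \<le> M"
  shows "\<bar>f x - f m - f' m * (x - m)\<bar> \<le> K / 2 * (x - m)^2"
proof (cases "x = m")
  case True
  then show ?thesis by simp
next
  case False
  define diff where "diff = (\<lambda>k::nat. if k = 0 then f else if k = 1 then f' else f'')"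
  have "\<forall>k t. k < 2 \<and> min x m \<le> t \<and> t \<le> max x m \<longrightarrow> DERIV (diff k) t :> diff (Suc k) t"
    using f' f'' by (auto simp: diff_def less_2_cases_iff)
  then obtain t where t: "if x < m then x < t \<and> t < m else m < t \<and> t < x"
    and "f x = (\<Sum>k<2. diff k m / fact k * (x - m)^k) + diff 2 t / fact 2 * (x - m)^2"
    using Taylor[of 2 diff f "min x m" "max x m" m x] False by (auto simp: diff_def)
  then have eq: "f x - f m - f' m * (x - m) = f'' t / 2 * (x - m)^2"
    by (simp add: diff_def numeral_2_eq_2)
  have "\<bar>f'' t\<bar> \<le> K"
    using t x m by (intro K) (auto split: if_splits)
  then show ?thesis
    unfolding eq by (simp add: abs_mult mult_right_mono)
qed

lemma power2_mult_le_cubes: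
  fixes a b :: real
  assumes "0 \<le> a" "0 \<le> b"
  shows "a^2 * b \<le> (2 * a^3 + b^3) / 3"
proof -
  have "0 \<le> (a - b)^2 * (2 * a + b)" using assms by simp
  then show ?thesis by (simp add: algebra_simps power2_eq_square power3_eq_cube)
qed

lemma norm_sum_scaleR_le_abs_inner:
  fixes v :: "'i \<Rightarrow> 'a::{real_inner, perfect_space}"
  obtains u where "norm u = 1" "norm (\<Sum>i\<in>N. c i *\<^sub>R v i) \<le> (\<Sum>i\<in>N. \<bar>c i\<bar> * \<bar>v i \<bullet> u\<bar>)"
proof (cases "(\<Sum>i\<in>N. c i *\<^sub>R v i) = 0")
  case True
  obtain u :: 'a where "norm u = 1" using vector_choose_size[of 1] by auto
  with True show ?thesis by (intro that) (auto intro: sum_nonneg)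
next
  case False
  define s where "s = (\<Sum>i\<in>N. c i *\<^sub>R v i)"
  define u where "u = s /\<^sub>R norm s"
  have "s \<noteq> 0" using False by (simp add: s_def)
  then have "norm s = s \<bullet> u"
    by (simp add: u_def power2_norm_eq_inner[symmetric] power2_eq_square)
  also have "\<dots> = (\<Sum>i\<in>N. c i * (v i \<bullet> u))"
    by (simp add: s_def inner_sum_left)
  also have "\<dots> \<le> (\<Sum>i\<in>N. \<bar>c i\<bar> * \<bar>v i \<bullet> u\<bar>)"
    by (intro sum_mono) (metis abs_ge_self abs_mult)
  finally show ?thesis
    using \<open>s \<noteq> 0\<close> by (intro that[of u]) (auto simp: s_def u_def)
qed

lemma abs_inner_le_norm_unit: "norm u = 1 \<Longrightarrow> \<bar>x \<bullet> u\<bar> \<le> norm x"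
  using Cauchy_Schwarz_ineq2[of x u] by simp

lemma abs_le_kappa3:
  assumes "continuous_on UNIV f" and "\<bar>t\<bar> \<le> \<alpha>"
  shows "\<bar>f t\<bar> \<le> kappa3 f \<alpha>"
proof -
  have "{\<bar>f x\<bar> | x. \<bar>x\<bar> \<le> \<alpha>} = (\<lambda>x. \<bar>f x\<bar>) ` {-\<alpha>..\<alpha>}"
    by (auto simp: abs_le_iff)
  moreover have "compact ((\<lambda>x. \<bar>f x\<bar>) ` {-\<alpha>..\<alpha>})"
    by (intro compact_continuous_image continuous_intros continuous_on_subset[OF assms(1)]) auto
  ultimately have "bdd_above {\<bar>f x\<bar> | x. \<bar>x\<bar> \<le> \<alpha>}"
    by (simp add: bounded_imp_bdd_above compact_imp_bounded)
  then show ?thesis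
    unfolding kappa3_def using assms(2) by (intro cSup_upper) auto
qed

lemma kappa3_nonneg: "continuous_on UNIV f \<Longrightarrow> 0 \<le> \<alpha> \<Longrightarrow> 0 \<le> kappa3 f \<alpha>"
  using abs_le_kappa3[of f 0 \<alpha>] by simp

lemma gamma2_upper:
  fixes \<theta> :: "nat \<Rightarrow> real^'r"
  assumes "norm u = 1"
  shows "(\<Sum>i\<in>N. w i * \<bar>\<theta> i \<bullet> u\<bar>^3) \<le> gamma2 N w \<theta>"
  unfolding gamma2_def
proof (rule cSup_upper)
  show "bdd_above {\<Sum>i\<in>N. w i * \<bar>\<theta> i \<bullet> u\<bar>^3 | u. norm u = 1}"
  proof (rule bdd_aboveI[where M = "\<Sum>i\<in>N. \<bar>w i\<bar> * norm (\<theta> i)^3"], clarify)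
    fix v :: "real^'r" assume "norm v = 1"
    then have "\<bar>\<theta> i \<bullet> v\<bar>^3 \<le> norm (\<theta> i)^3" for i
      by (intro power_mono abs_inner_le_norm_unit) auto
    then show "(\<Sum>i\<in>N. w i * \<bar>\<theta> i \<bullet> v\<bar>^3) \<le> (\<Sum>i\<in>N. \<bar>w i\<bar> * norm (\<theta> i)^3)"
      by (intro sum_mono mult_mono) auto
  qed
qed (use assms in auto)

lemma beta2_upper:
  fixes \<theta> :: "nat \<Rightarrow> real^'r"
  assumes "norm u = 1"
  shows "(\<Sum>i\<in>N. w i * ((\<theta> i - \<theta>s i) \<bullet> a)^2 * \<bar>\<theta> i \<bullet> u\<bar>) \<le> beta2 N w \<theta> \<theta>s a"
  unfolding beta2_def
proof (rule cSup_upper)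
  show "bdd_above {\<Sum>i\<in>N. w i * ((\<theta> i - \<theta>s i) \<bullet> a)^2 * \<bar>\<theta> i \<bullet> u\<bar> | u. norm u = 1}"
  proof (rule bdd_aboveI[where M = "\<Sum>i\<in>N. \<bar>w i\<bar> * ((\<theta> i - \<theta>s i) \<bullet> a)^2 * norm (\<theta> i)"], clarify)
    fix v :: "real^'r" assume "norm v = 1"
    then show "(\<Sum>i\<in>N. w i * ((\<theta> i - \<theta>s i) \<bullet> a)^2 * \<bar>\<theta> i \<bullet> v\<bar>)
        \<le> (\<Sum>i\<in>N. \<bar>w i\<bar> * ((\<theta> i - \<theta>s i) \<bullet> a)^2 * norm (\<theta> i))"
      by (intro sum_mono mult_mono abs_inner_le_norm_unit) auto
  qed
qed (use assms in auto)

lemma gamma2_nonneg: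
  fixes \<theta> :: "nat \<Rightarrow> real^'r"
  assumes "\<And>i. 0 \<le> w i"
  shows "0 \<le> gamma2 N w \<theta>"
proof -
  obtain u :: "real^'r" where "norm u = 1"
    using vector_choose_size[of 1] by auto
  then have "(\<Sum>i\<in>N. w i * \<bar>\<theta> i \<bullet> u\<bar>^3) \<le> gamma2 N w \<theta>"
    by (rule gamma2_upper)
  moreover have "0 \<le> (\<Sum>i\<in>N. w i * \<bar>\<theta> i \<bullet> u\<bar>^3)"
    using assms by (intro sum_nonneg) auto
  ultimately show ?thesis by linarith
qed

lemma beta2_nonneg:
  fixes \<theta> :: "nat \<Rightarrow> real^'r"
  assumes "\<And>i. 0 \<le> w i"
  shows "0 \<le> beta2 N w \<theta> \<theta>s a"
proof -
  obtain u :: "real^'r" where "norm u = 1"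
    using vector_choose_size[of 1] by auto
  then have "(\<Sum>i\<in>N. w i * ((\<theta> i - \<theta>s i) \<bullet> a)^2 * \<bar>\<theta> i \<bullet> u\<bar>) \<le> beta2 N w \<theta> \<theta>s a"
    by (rule beta2_upper)
  moreover have "0 \<le> (\<Sum>i\<in>N. w i * ((\<theta> i - \<theta>s i) \<bullet> a)^2 * \<bar>\<theta> i \<bullet> u\<bar>)"
    using assms by (intro sum_nonneg) auto
  ultimately show ?thesis by linarith
qed

lemma sum_power2_inner_le_gamma2:
  assumes w: "\<And>i. 0 \<le> w i" and u: "norm u = 1"
  shows "(\<Sum>i\<in>N. w i * (\<theta> i \<bullet> d)^2 * \<bar>\<theta> i \<bullet> u\<bar>) \<le> gamma2 N w \<theta> * (norm d)^2"
proof (cases "d = 0")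
  case True
  then show ?thesis by simp
next
  case False
  define v where "v = d /\<^sub>R norm d"
  have v: "norm v = 1" using False by (simp add: v_def)
  have "(\<Sum>i\<in>N. w i * (\<bar>\<theta> i \<bullet> v\<bar>^2 * \<bar>\<theta> i \<bullet> u\<bar>))
      \<le> (\<Sum>i\<in>N. (2 * (w i * \<bar>\<theta> i \<bullet> v\<bar>^3) + w i * \<bar>\<theta> i \<bullet> u\<bar>^3) / 3)"
  proof (intro sum_mono)
    fix i
    have "w i * (\<bar>\<theta> i \<bullet> v\<bar>^2 * \<bar>\<theta> i \<bullet> u\<bar>) \<le> w i * ((2 * \<bar>\<theta> i \<bullet> v\<bar>^3 + \<bar>\<theta> i \<bullet> u\<bar>^3) / 3)"
      using w by (intro mult_left_mono power2_mult_le_cubes) auto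
    then show "w i * (\<bar>\<theta> i \<bullet> v\<bar>^2 * \<bar>\<theta> i \<bullet> u\<bar>) \<le> (2 * (w i * \<bar>\<theta> i \<bullet> v\<bar>^3) + w i * \<bar>\<theta> i \<bullet> u\<bar>^3) / 3"
      by (simp add: algebra_simps)
  qed
  also have "\<dots> = (2 * (\<Sum>i\<in>N. w i * \<bar>\<theta> i \<bullet> v\<bar>^3) + (\<Sum>i\<in>N. w i * \<bar>\<theta> i \<bullet> u\<bar>^3)) / 3"
    by (simp add: sum.distrib sum_distrib_left flip: sum_divide_distrib)
  also have "\<dots> \<le> gamma2 N w \<theta>"
    using gamma2_upper[OF v, where N = N and w = w and \<theta> = \<theta>]
      gamma2_upper[OF u, where N = N and w = w and \<theta> = \<theta>] by simp
  finally have v_bound: "(\<Sum>i\<in>N. w i * (\<bar>\<theta> i \<bullet> v\<bar>^2 * \<bar>\<theta> i \<bullet> u\<bar>)) \<le> gamma2 N w \<theta>" .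
  have "\<theta> i \<bullet> d = norm d * (\<theta> i \<bullet> v)" for i
    using False by (simp add: v_def)
  then have "(\<Sum>i\<in>N. w i * (\<theta> i \<bullet> d)^2 * \<bar>\<theta> i \<bullet> u\<bar>)
      = (norm d)^2 * (\<Sum>i\<in>N. w i * (\<bar>\<theta> i \<bullet> v\<bar>^2 * \<bar>\<theta> i \<bullet> u\<bar>))"
    by (simp add: sum_distrib_left power_mult_distrib mult_ac)
  also have "\<dots> \<le> (norm d)^2 * gamma2 N w \<theta>"
    using v_bound by (rule mult_left_mono) simp
  finally show ?thesis
    by (simp only: mult.commute)
qed

lemma sigma_min_mult_norm_le:
  fixes M :: "real^'r^'r"
  shows "sigma_min M * norm u \<le> norm (M *v u)"
proof (cases "u = 0")
  case True
  then show ?thesis by simp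
next
  case False
  define v where "v = u /\<^sub>R norm u"
  have "norm v = 1" using False by (simp add: v_def)
  then have "sigma_min M \<le> norm (M *v v)"
    unfolding sigma_min_def by (intro cInf_lower) (auto intro: bdd_belowI[of _ 0])
  also have "M *v v = (1 / norm u) *\<^sub>R (M *v u)"
    by (simp add: v_def matrix_vector_mult_scaleR divide_inverse_commute)
  finally show ?thesis
    using False by (simp add: field_simps)
qed

lemma sigma_min_pos_right_inverse:
  fixes M :: "real^'r^'r"
  assumes "0 < sigma_min M"
  obtains M' where "\<And>v. M *v (M' *v v) = v" "\<And>v. norm (M' *v v) \<le> norm v / sigma_min M"
proof -
  have "inj ((*v) M)"
  proof (rule injI)
    fix x y
    assume "M *v x = M *v y"
    then have "sigma_min M * norm (x - y) \<le> 0"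
      using sigma_min_mult_norm_le[of M "x - y"] by (simp add: matrix_vector_mult_diff_distrib)
    then show "x = y"
      using assms by (simp add: mult_le_0_iff)
  qed
  then obtain M' where "M' ** M = mat 1"
    using matrix_left_invertible_injective by blast
  then have right_inv: "M *v (M' *v v) = v" for v
    by (simp add: matrix_vector_mul_assoc matrix_left_right_inverse)
  moreover have "norm (M' *v v) \<le> norm v / sigma_min M" for v
    using sigma_min_mult_norm_le[of M "M' *v v"] assms by (simp add: right_inv field_simps)
  ultimately show ?thesis using that by blast
qed

lemma perturbed_linear_equation_solvable:
  fixes M :: "real^'r^'r" and R :: "real^'r \<Rightarrow> real^'r"
  assumes \<sigma>: "0 < sigma_min M" and "0 \<le> \<rho>" and R: "continuous_on (cball 0 \<rho>) R"
    and bound: "\<And>d. norm d \<le> \<rho> \<Longrightarrow> norm (v - R d) \<le> sigma_min M * \<rho>"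
  obtains d where "norm d \<le> \<rho>" "M *v d = v - R d"
proof -
  obtain M' where M': "\<And>x. M *v (M' *v x) = x" "\<And>x. norm (M' *v x) \<le> norm x / sigma_min M"
    using sigma_min_pos_right_inverse[OF \<sigma>] by blast
  define T where "T d = M' *v (v - R d)" for d
  have "continuous_on (cball 0 \<rho>) T"
    unfolding T_def
    by (intro bounded_linear.continuous_on[OF matrix_vector_mul_bounded_linear] continuous_intros R)
  moreover have "T \<in> cball 0 \<rho> \<rightarrow> cball 0 \<rho>"
  proof
    fix d :: "real^'r"
    assume "d \<in> cball 0 \<rho>"
    then have "norm (T d) \<le> sigma_min M * \<rho> / sigma_min M"
      unfolding T_def using M'(2) bound \<sigma> by (meson divide_right_mono less_imp_le mem_cball_0 order_trans)
    then show "T d \<in> cball 0 \<rho>"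
      using \<sigma> by simp
  qed
  ultimately obtain d where d: "d \<in> cball 0 \<rho>" "T d = d"
    using brouwer[OF compact_cball convex_cball] \<open>0 \<le> \<rho>\<close> by (metis cball_eq_empty not_less)
  have "M *v d = M *v T d"
    using d(2) by simp
  also have "\<dots> = v - R d"
    by (simp add: T_def M'(1))
  finally show ?thesis
    using d(1) by (intro that) auto
qed

lemma I2_mult_vec:
  "I2 b2 N w \<theta> \<theta>s a *v d = (\<Sum>i\<in>N. (w i * b2 (\<theta>s i \<bullet> a) * (\<theta> i \<bullet> d)) *\<^sub>R \<theta> i)"
  by (simp add: vec_eq_iff matrix_vector_mult_def I2_def sum_component inner_vec_def
      sum_distrib_left sum_distrib_right mult_ac sum.swap[of _ N])

definition linearization_remainder :: "(real \<Rightarrow> real) \<Rightarrow> (real \<Rightarrow> real) \<Rightarrow> nat set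
    \<Rightarrow> (nat \<Rightarrow> real) \<Rightarrow> (nat \<Rightarrow> real^'r) \<Rightarrow> (nat \<Rightarrow> real^'r) \<Rightarrow> real^'r \<Rightarrow> real^'r \<Rightarrow> real^'r" where
  "linearization_remainder b1 b2 N w \<theta> \<theta>s a d =
     (\<Sum>i\<in>N. (w i * (b1 ((a + d) \<bullet> \<theta> i) - b1 (\<theta>s i \<bullet> a)
        - b2 (\<theta>s i \<bullet> a) * ((a + d) \<bullet> \<theta> i - \<theta>s i \<bullet> a))) *\<^sub>R \<theta> i)"

lemma S2_eq_linearization:
  "S2 \<phi> b1 N w y \<theta> (a + d) = (1 / \<phi>) *\<^sub>R
     (ZOmegaTheta b1 N w y \<theta> \<theta>s a - B2 b2 N w \<theta> \<theta>s a - I2 b2 N w \<theta> \<theta>s a *v d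
      - linearization_remainder b1 b2 N w \<theta> \<theta>s a d)"
proof -
  have "(a + d) \<bullet> \<theta> i - \<theta>s i \<bullet> a = (\<theta> i - \<theta>s i) \<bullet> a + \<theta> i \<bullet> d" for i
    by (simp add: inner_diff_left inner_diff_right inner_add_left inner_add_right inner_commute)
  then have "w i * (y i - b1 ((a + d) \<bullet> \<theta> i)) =
      w i * (y i - b1 (\<theta>s i \<bullet> a)) - w i * b2 (\<theta>s i \<bullet> a) * ((\<theta> i - \<theta>s i) \<bullet> a)
      - w i * b2 (\<theta>s i \<bullet> a) * (\<theta> i \<bullet> d)
      - w i * (b1 ((a + d) \<bullet> \<theta> i) - b1 (\<theta>s i \<bullet> a) - b2 (\<theta>s i \<bullet> a) * ((a + d) \<bullet> \<theta> i - \<theta>s i \<bullet> a))"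
    for i by (simp add: algebra_simps)
  then show ?thesis
    unfolding S2_def ZOmegaTheta_def B2_def I2_mult_vec linearization_remainder_def
    by (simp only: scaleR_diff_left sum_subtractf)
qed

lemma continuous_on_linearization_remainder:
  assumes "continuous_on UNIV b1"
  shows "continuous_on S (linearization_remainder b1 b2 N w \<theta> \<theta>s a)"
proof -
  have "continuous_on S (\<lambda>d. b1 ((a + d) \<bullet> \<theta> i))" for i
    by (rule continuous_on_compose2[OF assms _ subset_UNIV]) (intro continuous_intros)
  then show ?thesis
    unfolding linearization_remainder_def by (intro continuous_intros)
qed

lemma abs_linearization_error_le:
  fixes t ts a d :: "real^'r"
  assumes b2: "\<And>x. (b1 has_real_derivative b2 x) (at x)"
    and b3: "\<And>x. (b2 has_real_derivative b3 x) (at x)"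
    and b3_cont: "continuous_on UNIV b3"
    and t: "norm t \<le> C1" and ts: "norm ts \<le> C1" and a: "norm a \<le> C2" and d: "norm d \<le> C2"
    and \<alpha>: "2 * C1 * C2 \<le> \<alpha>"
  shows "\<bar>b1 ((a + d) \<bullet> t) - b1 (ts \<bullet> a) - b2 (ts \<bullet> a) * ((a + d) \<bullet> t - ts \<bullet> a)\<bar>
    \<le> kappa3 b3 \<alpha> * ((t \<bullet> d)^2 + ((t - ts) \<bullet> a)^2)"
proof -
  have C: "0 \<le> C1" "0 \<le> C2"
    using t a norm_ge_zero order_trans by blast+
  have "\<bar>(a + d) \<bullet> t\<bar> \<le> norm (a + d) * norm t"
    by (rule Cauchy_Schwarz_ineq2)
  also have "\<dots> \<le> (C2 + C2) * C1"
    using norm_triangle_le[of a d] a d t C by (intro mult_mono) auto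
  finally have x: "\<bar>(a + d) \<bullet> t\<bar> \<le> \<alpha>"
    using \<alpha> by (simp add: algebra_simps)
  have "\<bar>ts \<bullet> a\<bar> \<le> norm ts * norm a"
    by (rule Cauchy_Schwarz_ineq2)
  also have "\<dots> \<le> C1 * C2"
    using ts a C by (intro mult_mono) auto
  finally have m: "\<bar>ts \<bullet> a\<bar> \<le> \<alpha>"
    using \<alpha> mult_nonneg_nonneg[OF C] by linarith
  have "0 \<le> kappa3 b3 \<alpha>"
    using kappa3_nonneg[OF b3_cont] order_trans[OF abs_ge_zero m] .
  have square_sum: "(p + q)^2 \<le> 2 * (p^2 + q^2)" for p q :: real
    using zero_le_power2[of "p - q"] by (simp add: power2_eq_square algebra_simps)
  have split: "(a + d) \<bullet> t - ts \<bullet> a = t \<bullet> d + (t - ts) \<bullet> a"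
    by (simp add: inner_diff_left inner_diff_right inner_add_left inner_add_right inner_commute)
  have "\<bar>b1 ((a + d) \<bullet> t) - b1 (ts \<bullet> a) - b2 (ts \<bullet> a) * ((a + d) \<bullet> t - ts \<bullet> a)\<bar>
      \<le> kappa3 b3 \<alpha> / 2 * ((a + d) \<bullet> t - ts \<bullet> a)^2"
    by (rule taylor_linearization_error_le[OF b2 b3 _ x m]) (rule abs_le_kappa3[OF b3_cont])
  also have "\<dots> \<le> kappa3 b3 \<alpha> / 2 * (2 * ((t \<bullet> d)^2 + ((t - ts) \<bullet> a)^2))"
    unfolding split using \<open>0 \<le> kappa3 b3 \<alpha>\<close> square_sum by (intro mult_left_mono) simp_all
  also have "\<dots> = kappa3 b3 \<alpha> * ((t \<bullet> d)^2 + ((t - ts) \<bullet> a)^2)"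
    by simp
  finally show ?thesis .
qed

lemma norm_linearization_remainder_le:
  fixes \<theta> \<theta>s :: "nat \<Rightarrow> real^'r"
  assumes b2: "\<And>x. (b1 has_real_derivative b2 x) (at x)"
    and b3: "\<And>x. (b2 has_real_derivative b3 x) (at x)"
    and b3_cont: "continuous_on UNIV b3" and w: "\<And>i. 0 \<le> w i"
    and \<theta>: "\<forall>i\<in>N. norm (\<theta> i) \<le> C1" and \<theta>s: "\<forall>i\<in>N. norm (\<theta>s i) \<le> C1"
    and a: "norm a \<le> C2" and d: "norm d \<le> C2" and \<alpha>: "0 \<le> \<alpha>" "2 * C1 * C2 \<le> \<alpha>"
  shows "norm (linearization_remainder b1 b2 N w \<theta> \<theta>s a d)
    \<le> kappa3 b3 \<alpha> * (gamma2 N w \<theta> * (norm d)^2 + beta2 N w \<theta> \<theta>s a)"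
proof -
  define \<kappa> where "\<kappa> = kappa3 b3 \<alpha>"
  have \<kappa>: "0 \<le> \<kappa>"
    unfolding \<kappa>_def using kappa3_nonneg[OF b3_cont \<alpha>(1)] .
  obtain u where u: "norm u = 1" and remainder_le:
    "norm (linearization_remainder b1 b2 N w \<theta> \<theta>s a d)
      \<le> (\<Sum>i\<in>N. \<bar>w i * (b1 ((a + d) \<bullet> \<theta> i) - b1 (\<theta>s i \<bullet> a)
          - b2 (\<theta>s i \<bullet> a) * ((a + d) \<bullet> \<theta> i - \<theta>s i \<bullet> a))\<bar> * \<bar>\<theta> i \<bullet> u\<bar>)"
    unfolding linearization_remainder_def by (rule norm_sum_scaleR_le_abs_inner)
  note remainder_le
  also have "\<dots> \<le> (\<Sum>i\<in>N. w i * (\<kappa> * ((\<theta> i \<bullet> d)^2 + ((\<theta> i - \<theta>s i) \<bullet> a)^2)) * \<bar>\<theta> i \<bullet> u\<bar>)"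
    using abs_linearization_error_le[OF b2 b3 b3_cont _ _ a d \<alpha>(2)] \<theta> \<theta>s w
    by (intro sum_mono mult_right_mono) (auto simp: \<kappa>_def abs_mult intro: mult_left_mono)
  also have "\<dots> = \<kappa> * (\<Sum>i\<in>N. w i * (\<theta> i \<bullet> d)^2 * \<bar>\<theta> i \<bullet> u\<bar>)
      + \<kappa> * (\<Sum>i\<in>N. w i * ((\<theta> i - \<theta>s i) \<bullet> a)^2 * \<bar>\<theta> i \<bullet> u\<bar>)"
    by (simp add: sum_distrib_left algebra_simps flip: sum.distrib)
  also have "\<dots> \<le> \<kappa> * (gamma2 N w \<theta> * (norm d)^2) + \<kappa> * beta2 N w \<theta> \<theta>s a"
    using sum_power2_inner_le_gamma2[OF w u] beta2_upper[OF u] \<kappa>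
    by (intro add_mono mult_left_mono) auto
  finally show ?thesis
    by (simp add: \<kappa>_def algebra_simps)
qed

lemma S2_has_zero_in_ball:
  fixes b1 b2 b3 :: "real \<Rightarrow> real" and N :: "nat set" and w y :: "nat \<Rightarrow> real"
    and \<theta> \<theta>s :: "nat \<Rightarrow> real^'r" and a :: "real^'r" and \<alpha> :: real
  defines "\<sigma> \<equiv> sigma_min (I2 b2 N w \<theta> \<theta>s a)" and "\<kappa> \<equiv> kappa3 b3 \<alpha>"
    and "E \<equiv> norm (ZOmegaTheta b1 N w y \<theta> \<theta>s a) + norm (B2 b2 N w \<theta> \<theta>s a)
      + beta2 N w \<theta> \<theta>s a * kappa3 b3 \<alpha>"
  assumes b2: "\<And>x. (b1 has_real_derivative b2 x) (at x)"
    and b3: "\<And>x. (b2 has_real_derivative b3 x) (at x)"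
    and b3_cont: "continuous_on UNIV b3" and w: "\<And>i. 0 \<le> w i"
    and \<theta>: "\<forall>i\<in>N. norm (\<theta> i) \<le> C1" and \<theta>s: "\<forall>i\<in>N. norm (\<theta>s i) \<le> C1"
    and a: "norm a \<le> C2" and \<alpha>: "0 \<le> \<alpha>" "2 * C1 * C2 \<le> \<alpha>"
    and \<sigma>: "0 < \<sigma>" and radius: "2 * E / \<sigma> \<le> C2"
    and quadratic: "gamma2 N w \<theta> * \<kappa> * (2 * E / \<sigma>)^2 \<le> E"
  obtains d where "norm d \<le> 2 * E / \<sigma>" "S2 \<phi> b1 N w y \<theta> (a + d) = 0"
proof -
  define \<rho> where "\<rho> = 2 * E / \<sigma>"
  define R where "R = linearization_remainder b1 b2 N w \<theta> \<theta>s a"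
  define v where "v = ZOmegaTheta b1 N w y \<theta> \<theta>s a - B2 b2 N w \<theta> \<theta>s a"
  have \<kappa>: "0 \<le> \<kappa>"
    unfolding \<kappa>_def using kappa3_nonneg[OF b3_cont \<alpha>(1)] .
  have "0 \<le> E"
    unfolding E_def \<kappa>_def[symmetric]
    using \<kappa> beta2_nonneg[where w = w, OF w] by (intro add_nonneg_nonneg mult_nonneg_nonneg norm_ge_zero)
  then have \<rho>: "0 \<le> \<rho>" "\<sigma> * \<rho> = 2 * E"
    using \<sigma> by (simp_all add: \<rho>_def)
  have "norm (v - R d) \<le> \<sigma> * \<rho>" if d: "norm d \<le> \<rho>" for d
  proof -
    have "\<kappa> * (gamma2 N w \<theta> * (norm d)^2) \<le> \<kappa> * (gamma2 N w \<theta> * \<rho>^2)"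
      using d \<kappa> gamma2_nonneg[where w = w, OF w] by (intro mult_left_mono power_mono) auto
    also have "\<dots> \<le> E"
      using quadratic by (simp add: \<rho>_def mult_ac)
    finally have "\<kappa> * (gamma2 N w \<theta> * (norm d)^2) \<le> E" .
    moreover have "norm (R d) \<le> \<kappa> * (gamma2 N w \<theta> * (norm d)^2 + beta2 N w \<theta> \<theta>s a)"
      unfolding R_def \<kappa>_def using order_trans[OF d[unfolded \<rho>_def] radius] \<alpha>
      by (rule norm_linearization_remainder_le[OF b2 b3 b3_cont w \<theta> \<theta>s a])
    moreover have "norm (v - R d) \<le> norm (ZOmegaTheta b1 N w y \<theta> \<theta>s a) + norm (B2 b2 N w \<theta> \<theta>s a) + norm (R d)"
      unfolding v_def
      using norm_triangle_ineq4[of "ZOmegaTheta b1 N w y \<theta> \<theta>s a - B2 b2 N w \<theta> \<theta>s a" "R d"]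
        norm_triangle_ineq4[of "ZOmegaTheta b1 N w y \<theta> \<theta>s a" "B2 b2 N w \<theta> \<theta>s a"]
      by linarith
    ultimately show ?thesis
      unfolding \<rho>(2) E_def \<kappa>_def[symmetric] by (simp add: algebra_simps)
  qed
  moreover have "continuous_on UNIV b1"
    using b2 by (intro continuous_at_imp_continuous_on) (auto intro: DERIV_isCont)
  then have "continuous_on (cball 0 \<rho>) R"
    unfolding R_def by (rule continuous_on_linearization_remainder)
  ultimately obtain d where d: "norm d \<le> \<rho>" "I2 b2 N w \<theta> \<theta>s a *v d = v - R d"
    using perturbed_linear_equation_solvable[of "I2 b2 N w \<theta> \<theta>s a" \<rho> R v] \<sigma> \<rho>(1)
    unfolding \<sigma>_def by blast
  have "S2 \<phi> b1 N w y \<theta> (a + d) = (1 / \<phi>) *\<^sub>R (v - I2 b2 N w \<theta> \<theta>s a *v d - R d)"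
    unfolding v_def R_def by (rule S2_eq_linearization)
  with d show ?thesis
    by (intro that) (simp_all add: \<rho>_def)
qed

lemma radius_bounds_of_min_condition:
  fixes \<sigma> \<gamma> \<kappa> E C :: real
  assumes \<sigma>: "0 < \<sigma>" and \<gamma>: "0 \<le> \<gamma>" and \<kappa>: "0 \<le> \<kappa>" and E: "0 \<le> E"
    and cond: "if \<gamma> * \<kappa> = 0 then E \<le> \<sigma> * C / 2 else E \<le> min (\<sigma>^2 / (4 * \<gamma> * \<kappa>)) (\<sigma> * C / 2)"
  shows "2 * E / \<sigma> \<le> C" and "\<gamma> * \<kappa> * (2 * E / \<sigma>)^2 \<le> E"
proof -
  have "E \<le> \<sigma> * C / 2"
    using cond by (auto split: if_splits)
  then show "2 * E / \<sigma> \<le> C"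
    using \<sigma> by (simp add: field_simps)
  show "\<gamma> * \<kappa> * (2 * E / \<sigma>)^2 \<le> E"
  proof (cases "\<gamma> * \<kappa> = 0")
    case True
    then show ?thesis using E by auto
  next
    case False
    then have "0 < \<gamma> * \<kappa>"
      using \<gamma> \<kappa> by (simp add: less_le)
    moreover have "E \<le> \<sigma>^2 / (4 * \<gamma> * \<kappa>)"
      using cond False by simp
    ultimately have "4 * (\<gamma> * \<kappa>) * E \<le> \<sigma>^2"
      by (simp add: field_simps)
    then have "4 * (\<gamma> * \<kappa>) * E * E \<le> \<sigma>^2 * E"
      using E by (rule mult_right_mono)
    then show ?thesis
      using \<sigma> by (simp add: field_simps power2_eq_square)
  qed
qed

theorem mainTheorem11:
  fixes \<phi> C1 C2 :: real
    and b b1 b2 b3 :: "real \<Rightarrow> real"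
    and n p j :: nat and N2 :: "nat set"
    and \<theta> \<theta>s :: "nat \<Rightarrow> real^'r" and As :: "nat \<Rightarrow> real^'r"
    and y \<omega> :: "nat \<Rightarrow> nat \<Rightarrow> real"
  assumes phi_pos: "\<phi> > 0"
    and b1: "\<And>x. (b has_real_derivative b1 x) (at x)"
    and b2: "\<And>x. (b1 has_real_derivative b2 x) (at x)"
    and b3: "\<And>x. (b2 has_real_derivative b3 x) (at x)"
    and b3_cont: "continuous_on UNIV b3"
    and b2_pos: "\<And>x. b2 x > 0"
    and N2_sub: "N2 \<subseteq> {1..n}" and N2_ne: "N2 \<noteq> {}"
    and omega01: "\<And>i k. \<omega> i k \<in> {0, 1}"
    and C1_pos: "C1 > 0" and C2_pos: "C2 > 0"
    and j: "j \<in> {1..p}"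
    and Theta_bd: "\<forall>i\<in>N2. norm (\<theta> i) \<le> C1"
    and Thetas_bd: "\<forall>i\<in>N2. norm (\<theta>s i) \<le> C1"
    and As_bd: "\<forall>k\<in>{1..p}. norm (As k) \<le> C2"
    and sigma_pos: "sigma_min (I2 b2 N2 (\<lambda>i. \<omega> i j) \<theta> \<theta>s (As j)) > 0"
    and cond:
      "let \<sigma> = sigma_min (I2 b2 N2 (\<lambda>i. \<omega> i j) \<theta> \<theta>s (As j));
           \<kappa> = kappa3 b3 (3 * C1 * C2);
           \<gamma> = gamma2 N2 (\<lambda>i. \<omega> i j) \<theta>;
           E = norm (ZOmegaTheta b1 N2 (\<lambda>i. \<omega> i j) (\<lambda>i. y i j) \<theta> \<theta>s (As j))
               + norm (B2 b2 N2 (\<lambda>i. \<omega> i j) \<theta> \<theta>s (As j))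
               + beta2 N2 (\<lambda>i. \<omega> i j) \<theta> \<theta>s (As j) * \<kappa>
       in (if \<gamma> * \<kappa> = 0 then E \<le> \<sigma> * C2 / 2
           else E \<le> min (\<sigma>^2 / (4 * \<gamma> * \<kappa>)) (\<sigma> * C2 / 2))"
  shows "\<exists>a :: real^'r.
           S2 \<phi> b1 N2 (\<lambda>i. \<omega> i j) (\<lambda>i. y i j) \<theta> a = 0 \<and>
           norm (a - As j) \<le> 2 / sigma_min (I2 b2 N2 (\<lambda>i. \<omega> i j) \<theta> \<theta>s (As j)) *
              (norm (ZOmegaTheta b1 N2 (\<lambda>i. \<omega> i j) (\<lambda>i. y i j) \<theta> \<theta>s (As j))
               + norm (B2 b2 N2 (\<lambda>i. \<omega> i j) \<theta> \<theta>s (As j))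
               + beta2 N2 (\<lambda>i. \<omega> i j) \<theta> \<theta>s (As j) * kappa3 b3 (3 * C1 * C2)) \<and>
           norm (a - As j) \<le> C2"
proof -
  define \<sigma> where "\<sigma> = sigma_min (I2 b2 N2 (\<lambda>i. \<omega> i j) \<theta> \<theta>s (As j))"
  define \<kappa> where "\<kappa> = kappa3 b3 (3 * C1 * C2)"
  define \<gamma> where "\<gamma> = gamma2 N2 (\<lambda>i. \<omega> i j) \<theta>"
  define E where "E = norm (ZOmegaTheta b1 N2 (\<lambda>i. \<omega> i j) (\<lambda>i. y i j) \<theta> \<theta>s (As j))
    + norm (B2 b2 N2 (\<lambda>i. \<omega> i j) \<theta> \<theta>s (As j)) + beta2 N2 (\<lambda>i. \<omega> i j) \<theta> \<theta>s (As j) * \<kappa>"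
  have w: "0 \<le> \<omega> i j" for i
    using omega01[of i j] by auto
  have a: "norm (As j) \<le> C2"
    using As_bd j by blast
  have \<alpha>: "0 \<le> 3 * C1 * C2" "2 * C1 * C2 \<le> 3 * C1 * C2"
    using C1_pos C2_pos by simp_all
  have \<kappa>: "0 \<le> \<kappa>"
    unfolding \<kappa>_def using kappa3_nonneg[OF b3_cont \<alpha>(1)] .
  have "0 \<le> E"
    unfolding E_def using \<kappa> beta2_nonneg[where w = "\<lambda>i. \<omega> i j", OF w]
    by (intro add_nonneg_nonneg mult_nonneg_nonneg norm_ge_zero)
  then have "2 * E / \<sigma> \<le> C2" "\<gamma> * \<kappa> * (2 * E / \<sigma>)^2 \<le> E"
    using radius_bounds_of_min_condition[of \<sigma> \<gamma> \<kappa> E C2] sigma_pos \<kappa> gamma2_nonneg[where w = "\<lambda>i. \<omega> i j", OF w]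
      cond unfolding Let_def \<sigma>_def \<kappa>_def \<gamma>_def E_def by blast+
  then obtain d where "norm d \<le> 2 * E / \<sigma>" "S2 \<phi> b1 N2 (\<lambda>i. \<omega> i j) (\<lambda>i. y i j) \<theta> (As j + d) = 0"
    using S2_has_zero_in_ball[OF b2 b3 b3_cont w Theta_bd Thetas_bd a \<alpha> sigma_pos]
    unfolding \<sigma>_def \<kappa>_def \<gamma>_def E_def by blast
  with \<open>2 * E / \<sigma> \<le> C2\<close> show ?thesis
    unfolding \<sigma>_def \<kappa>_def E_def by (intro exI[of _ "As j + d"]) auto
qed

end
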